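(* Let $m\ge1$ and $m_0$ be integers, and let $F(q)=(\gamma(t,q)-1)^m/q^{m_0}$. Then $$0=-q^{m-m_0}+\beta(m;t,q)\,F-t^mq^{m+m_0}F^2.$$
   Context: $\gamma(t,q)=\sum_{n\ge0}\gamma_n(t)q^n$ where $\gamma_n(t)=\sum_{k=0}^{n}\binom{n}{k}\binom{n-1}{k}\frac{1}{k+1}t^k$ are the Narayana polynomials (formal power series in $q$; $F$ is a formal Laurent series). For $0\le d\le m-1$ let $\rho(m;t,d)=\frac{m}{m-d}\sum_{i=0}^{d}\binom{m-1-d+i}{i}\binom{m-1-i}{d-i}t^i$ and $\rho(m;t,m)=1+t^m$; set $\beta(m;t,q)=\sum_{d=0}^{m}\rho(m;t,d)(-q)^d$. *)

theory Defs
  imports "HOL-Computational_Algebra.Formal_Laurent_Series"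
begin

text \<open>Narayana polynomial gamma_n(t) = sum_{k=0}^n C(n,k) C(n-1,k) t^k/(k+1), with C(n-1,k) read
  as the usual binomial (so gamma_0 = 1).\<close>
definition narayana :: "nat \<Rightarrow> 'a::field_char_0 \<Rightarrow> 'a" where
  "narayana n t = (\<Sum>k=0..n. of_nat ((n choose k) * ((n - 1) choose k)) / of_nat (k + 1) * t ^ k)"

definition gammaF :: "'a::field_char_0 \<Rightarrow> 'a fps" where
  "gammaF t = Abs_fps (\<lambda>n. narayana n t)"

definition rho :: "nat \<Rightarrow> 'a::field_char_0 \<Rightarrow> nat \<Rightarrow> 'a" where
  "rho m t d = (if d = m then 1 + t ^ m
     else of_nat m / of_nat (m - d) *
       (\<Sum>i=0..d. of_nat (((m - 1 - d + i) choose i) * ((m - 1 - i) choose (d - i))) * t ^ i))"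

definition betaF :: "nat \<Rightarrow> 'a::field_char_0 \<Rightarrow> 'a fps" where
  "betaF m t = (\<Sum>d=0..m. fps_const (rho m t d) * (- fps_X) ^ d)"

definition FF :: "nat \<Rightarrow> int \<Rightarrow> 'a::field_char_0 \<Rightarrow> 'a fls" where
  "FF m m0 t = fls_shift m0 (fps_to_fls ((gammaF t - 1) ^ m))"

end

theory Submission
  imports Defs
begin

(* Put G = gamma - 1. The Narayana polynomials satisfy the three-term recurrence
   (n+1) gamma_n = (2n-1)(1+t) gamma_(n-1) - (n-2)(1-t)^2 gamma_(n-2). It says that
   S = 2tqG + (1+t)q - 1 solves 2 D S' = D' S with D = 1 - 2(1+t)q + (1-t)^2 q^2, so S^2 = D, which is
   the quadratic equation t q G^2 + ((1+t)q - 1) G + q = 0. Hence u = tqG and v = q/G satisfy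
   u + v = 1 - (1+t)q and u v = t q^2. The inner sums of rho are the coefficients of
   (1 - tq)^(-a-1) (1 - q)^(-a-1), and the two first-order relations of this product give
   beta(m+2) = (1 - (1+t)q) beta(m+1) - t q^2 beta(m), so beta(m) = u^m + v^m. Multiplying by G^m
   yields beta(m) G^m = q^m + t^m q^m G^(2m), which is the claim multiplied by q^m0. *)

section \<open>The recurrence of the Narayana polynomials\<close>

lemma of_nat_binomial_Suc_right:
  "(of_nat (Suc k) :: 'a::field_char_0) * of_nat (n choose Suc k) = (of_nat n - of_nat k) * of_nat (n choose k)"
  using gbinomial_mult_1[of "of_nat n :: 'a" k] by (simp add: binomial_gbinomial algebra_simps)

lemma of_nat_binomial_Suc_left:
  "(of_nat (Suc n) - of_nat k :: 'a::field_char_0) * of_nat (Suc n choose k)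
     = of_nat (Suc n) * of_nat (n choose k)"
  using gbinomial_absorb_comp[of "of_nat (Suc n) :: 'a" k] by (simp add: binomial_gbinomial)

definition narayana_coeff :: "nat \<Rightarrow> nat \<Rightarrow> 'a::field_char_0" where
  "narayana_coeff n k = of_nat (n choose k) * of_nat ((n - 1) choose k) / of_nat (k + 1)"

lemma narayana_coeff_eq_0: "0 < n \<Longrightarrow> n \<le> k \<Longrightarrow> narayana_coeff n k = 0"
  by (simp add: narayana_coeff_def binomial_eq_0)

lemma narayana_coeff_Suc_right:
  "narayana_coeff (Suc n) (Suc k) = (of_nat (Suc n) - of_nat k) * (of_nat n - of_nat k)
     / (of_nat (Suc k) * of_nat (Suc (Suc k))) * (narayana_coeff (Suc n) k :: 'a::field_char_0)"
proof -
  have "(of_nat (Suc k) * of_nat (Suc (Suc k)) :: 'a) * narayana_coeff (Suc n) (Suc k)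
      = of_nat (Suc k) * of_nat (Suc n choose Suc k) * (of_nat (Suc k) * of_nat (n choose Suc k))
        / of_nat (Suc k)"
    by (simp add: narayana_coeff_def field_simps del: of_nat_Suc)
  also have "\<dots> = (of_nat (Suc n) - of_nat k) * (of_nat n - of_nat k) * narayana_coeff (Suc n) k"
    unfolding of_nat_binomial_Suc_right by (simp add: narayana_coeff_def)
  finally show ?thesis
    by (simp add: field_simps del: of_nat_Suc)
qed

lemma narayana_coeff_Suc_left:
  "narayana_coeff (Suc n) k = (of_nat (Suc (Suc n)) - of_nat k) * (of_nat (Suc n) - of_nat k)
     / (of_nat (Suc (Suc n)) * of_nat (Suc n)) * (narayana_coeff (Suc (Suc n)) k :: 'a::field_char_0)"
proof -
  have "(of_nat (Suc (Suc n)) - of_nat k) * (of_nat (Suc n) - of_nat k) * narayana_coeff (Suc (Suc n)) k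
      = (of_nat (Suc (Suc n)) - of_nat k) * of_nat (Suc (Suc n) choose k)
        * ((of_nat (Suc n) - of_nat k) * of_nat (Suc n choose k)) / (of_nat (k + 1) :: 'a)"
    by (simp add: narayana_coeff_def ac_simps)
  also have "\<dots> = (of_nat (Suc (Suc n)) * of_nat (Suc n) :: 'a) * narayana_coeff (Suc n) k"
    unfolding of_nat_binomial_Suc_left by (simp add: narayana_coeff_def ac_simps)
  finally show ?thesis
    by (simp add: field_simps del: of_nat_Suc)
qed

lemma narayana_coeff_rec:
  fixes N k :: nat
  defines "c \<equiv> narayana_coeff :: nat \<Rightarrow> nat \<Rightarrow> 'a::field_char_0"
  shows "of_nat (N + 4) * c (N + 3) (k + 2) =
    of_nat (2 * N + 5) * (c (N + 2) (k + 2) + c (N + 2) (k + 1))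
    - of_nat (N + 1) * (c (N + 1) (k + 2) - 2 * c (N + 1) (k + 1) + c (N + 1) k)"
proof -
  define n :: 'a where "n = of_nat N"
  define j :: 'a where "j = of_nat k"
  have Suc_eq: "N + 3 = Suc (Suc (Suc N))" "N + 2 = Suc (Suc N)" "N + 1 = Suc N"
    "k + 2 = Suc (Suc k)" "k + 1 = Suc k"
    by simp_all
  have right: "c (Suc m) (Suc k) = (of_nat m + 1 - j) * (of_nat m - j) / ((j + 1) * (j + 2)) * c (Suc m) k"
    "c (Suc m) (Suc (Suc k)) = (of_nat m - j) * (of_nat m - 1 - j) / ((j + 2) * (j + 3)) * c (Suc m) (Suc k)"
    for m
    using narayana_coeff_Suc_right[where 'a='a, of m k] narayana_coeff_Suc_right[where 'a='a, of m "Suc k"]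
    by (simp_all add: c_def j_def algebra_simps)
  have left: "c (Suc m) k
      = (of_nat m + 2 - j) * (of_nat m + 1 - j) / ((of_nat m + 2) * (of_nat m + 1)) * c (Suc (Suc m)) k"
    for m
    using narayana_coeff_Suc_left[where 'a='a, of m k] by (simp add: c_def j_def algebra_simps)
  (* Every term is a rational multiple of x, so the claim becomes an identity of rational functions. *)
  define x where "x = c (N + 3) k"
  have x1: "c (N + 3) (k + 1) = (n + 3 - j) * (n + 2 - j) / ((j + 1) * (j + 2)) * x"
    and x2: "c (N + 3) (k + 2) = (n + 2 - j) * (n + 1 - j) / ((j + 2) * (j + 3)) * c (N + 3) (k + 1)"
    and a0: "c (N + 2) k = (n + 3 - j) * (n + 2 - j) / ((n + 3) * (n + 2)) * x"
    and a1: "c (N + 2) (k + 1) = (n + 2 - j) * (n + 1 - j) / ((j + 1) * (j + 2)) * c (N + 2) k"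
    and a2: "c (N + 2) (k + 2) = (n + 1 - j) * (n - j) / ((j + 2) * (j + 3)) * c (N + 2) (k + 1)"
    and b0: "c (N + 1) k = (n + 2 - j) * (n + 1 - j) / ((n + 2) * (n + 1)) * c (N + 2) k"
    and b1: "c (N + 1) (k + 1) = (n + 1 - j) * (n - j) / ((j + 1) * (j + 2)) * c (N + 1) k"
    and b2: "c (N + 1) (k + 2) = (n - j) * (n - 1 - j) / ((j + 2) * (j + 3)) * c (N + 1) (k + 1)"
    unfolding x_def Suc_eq right left[of N] left[of "Suc N"] by (simp_all add: n_def algebra_simps)
  have of_nat_eq: "of_nat (N + 4) = n + 4" "of_nat (2 * N + 5) = 2 * n + 5" "of_nat (N + 1) = n + 1"
    by (simp_all add: n_def)
  have as_nat: "n + 1 = of_nat (N + 1)" "n + 2 = of_nat (N + 2)" "n + 3 = of_nat (N + 3)"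
    "j + 1 = of_nat (k + 1)" "j + 2 = of_nat (k + 2)" "j + 3 = of_nat (k + 3)"
    by (simp_all add: n_def j_def)
  have "n + 1 \<noteq> 0" "n + 2 \<noteq> 0" "n + 3 \<noteq> 0" "j + 1 \<noteq> 0" "j + 2 \<noteq> 0" "j + 3 \<noteq> 0"
    unfolding as_nat of_nat_eq_0_iff by simp_all
  then show ?thesis
    unfolding x2 x1 a2 a1 b2 b1 b0 a0 of_nat_eq by (simp add: divide_simps) algebra
qed

lemma narayana_coeff_0 [simp]: "narayana_coeff n 0 = 1"
  by (simp add: narayana_coeff_def)

lemma narayana_coeff_1: "narayana_coeff (Suc n) 1 = (of_nat (Suc n) * of_nat n / 2 :: 'a::field_char_0)"
  by (simp add: narayana_coeff_def)

lemma narayana_eq_sum_coeff: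
  assumes "0 < n" "n \<le> M"
  shows "narayana n t = (\<Sum>k\<le>M. narayana_coeff n k * t ^ k)"
proof -
  have "narayana n t = (\<Sum>k\<le>n. narayana_coeff n k * t ^ k)"
    by (simp add: narayana_def narayana_coeff_def atLeast0AtMost)
  also have "\<dots> = (\<Sum>k\<le>M. narayana_coeff n k * t ^ k)"
    using assms by (intro sum.mono_neutral_left) (auto simp: narayana_coeff_eq_0)
  finally show ?thesis .
qed

definition shift_seq :: "(nat \<Rightarrow> 'a::zero) \<Rightarrow> nat \<Rightarrow> 'a" where
  "shift_seq f k = (case k of 0 \<Rightarrow> 0 | Suc j \<Rightarrow> f j)"

lemma mult_var_sum_powers_shift:
  fixes f :: "nat \<Rightarrow> 'a::comm_ring_1"
  assumes "f M = 0"
  shows "t * (\<Sum>k\<le>M. f k * t ^ k) = (\<Sum>k\<le>M. shift_seq f k * t ^ k)"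
proof (cases M)
  case (Suc M')
  have "t * (\<Sum>k\<le>M. f k * t ^ k) = (\<Sum>k\<le>M'. f k * t ^ Suc k)"
    using assms by (simp add: Suc sum_distrib_left algebra_simps)
  also have "\<dots> = (\<Sum>k\<le>M. shift_seq f k * t ^ k)"
    by (simp add: Suc shift_seq_def sum.atMost_Suc_shift del: sum.atMost_Suc)
  finally show ?thesis .
qed (use assms in \<open>simp add: shift_seq_def\<close>)

lemma narayana_coeff_rec_shift:
  fixes N k :: nat
  defines "c \<equiv> narayana_coeff :: nat \<Rightarrow> nat \<Rightarrow> 'a::field_char_0"
  shows "of_nat (N + 4) * c (N + 3) k =
    of_nat (2 * N + 5) * (c (N + 2) k + shift_seq (c (N + 2)) k)
    - of_nat (N + 1) * (c (N + 1) k - 2 * shift_seq (c (N + 1)) k + shift_seq (shift_seq (c (N + 1))) k)"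
proof -
  consider "k = 0" | "k = 1" | j where "k = j + 2"
    by (metis One_nat_def add_2_eq_Suc' not0_implies_Suc)
  then show ?thesis
  proof cases
    case 1
    then show ?thesis
      by (simp add: c_def shift_seq_def algebra_simps)
  next
    case 2
    have "N + 3 = Suc (N + 2)" "N + 2 = Suc (N + 1)" "N + 1 = Suc N"
      by simp_all
    then show ?thesis
      unfolding 2 c_def shift_seq_def by (simp only: narayana_coeff_1) (simp add: field_simps)
  next
    case 3
    then show ?thesis
      using narayana_coeff_rec[of N j] by (simp add: c_def shift_seq_def numeral_eq_Suc)
  qed
qed

lemma narayana_rec:
  fixes t :: "'a::field_char_0"
  shows "of_nat (N + 4) * narayana (N + 3) t =
    (1 + t) * of_nat (2 * N + 5) * narayana (N + 2) t - (1 - t)^2 * of_nat (N + 1) * narayana (N + 1) t"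
proof -
  define c :: "nat \<Rightarrow> nat \<Rightarrow> 'a" where "c = narayana_coeff"
  define S where "S f = (\<Sum>k\<le>N + 3. f k * t ^ k)" for f
  have nar: "narayana (N + 1) t = S (c (N + 1))" "narayana (N + 2) t = S (c (N + 2))"
    "narayana (N + 3) t = S (c (N + 3))"
    unfolding S_def c_def by (intro narayana_eq_sum_coeff; simp)+
  have shift: "t * S f = S (shift_seq f)" if "f (N + 3) = 0" for f
    unfolding S_def using that by (rule mult_var_sum_powers_shift)
  have shifts: "t * S (c (N + 2)) = S (shift_seq (c (N + 2)))" "t * S (c (N + 1)) = S (shift_seq (c (N + 1)))"
    "t * S (shift_seq (c (N + 1))) = S (shift_seq (shift_seq (c (N + 1))))"
    by (intro shift; simp add: c_def shift_seq_def narayana_coeff_eq_0 numeral_eq_Suc)+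
  have "(1 + t) * of_nat (2 * N + 5) * narayana (N + 2) t - (1 - t)^2 * of_nat (N + 1) * narayana (N + 1) t
      = of_nat (2 * N + 5) * (S (c (N + 2)) + t * S (c (N + 2)))
        - of_nat (N + 1) * (S (c (N + 1)) - 2 * (t * S (c (N + 1))) + t * (t * S (c (N + 1))))"
    unfolding nar by (simp add: algebra_simps power2_eq_square)
  also have "\<dots> = S (\<lambda>k. of_nat (2 * N + 5) * (c (N + 2) k + shift_seq (c (N + 2)) k)
      - of_nat (N + 1) * (c (N + 1) k - 2 * shift_seq (c (N + 1)) k + shift_seq (shift_seq (c (N + 1))) k))"
    unfolding shifts unfolding S_def by (simp add: sum.distrib sum_subtractf sum_distrib_left algebra_simps)
  also have "\<dots> = of_nat (N + 4) * narayana (N + 3) t"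
    unfolding nar S_def c_def narayana_coeff_rec_shift[symmetric] by (simp add: sum_distrib_left mult.assoc)
  finally show ?thesis ..
qed

section \<open>The quadratic equation for the Narayana series\<close>

lemma narayana_0 [simp]: "narayana 0 t = 1"
  by (simp add: narayana_def)

lemma narayana_1 [simp]: "narayana (Suc 0) t = 1"
  by (simp add: narayana_def)

lemma narayana_2 [simp]: "narayana (Suc (Suc 0)) t = 1 + t"
  by (simp add: narayana_def)

lemma narayana_at_0: "narayana n (0 :: 'a::field_char_0) = 1"
  by (simp add: narayana_def power_0_left sum.atLeast_Suc_atMost)

lemma fps_square_eq_of_deriv:
  fixes f g :: "'a::field_char_0 fps"
  assumes g0: "g $ 0 \<noteq> 0" and f0: "(f $ 0)^2 = g $ 0"
    and ode: "2 * g * fps_deriv f = fps_deriv g * f"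
  shows "f^2 = g"
proof -
  define h where "h = inverse g"
  have gh: "g * h = 1"
    unfolding h_def using g0 by (simp add: inverse_mult_eq_1')
  have "fps_deriv (f^2 * h) = h^2 * f * (2 * g * fps_deriv f - fps_deriv g * f)"
  proof -
    have "fps_deriv h = - fps_deriv g * h^2"
      unfolding h_def using g0 by (simp add: fps_inverse_deriv)
    then have "fps_deriv (f^2 * h) = 2 * f * fps_deriv f * h * (g * h) - f^2 * fps_deriv g * h^2"
      by (simp add: gh power2_eq_square algebra_simps mult_2)
    then show ?thesis
      by (simp add: power2_eq_square algebra_simps)
  qed
  then have "fps_deriv (f^2 * h) = 0"
    using ode by simp
  then have "f^2 * h = fps_const ((f^2 * h) $ 0)"
    by (simp only: fps_deriv_eq_0_iff)
  also have "(f^2 * h) $ 0 = 1"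
    using g0 f0 by (simp add: h_def power2_eq_square)
  finally have "f^2 * h = 1" by simp
  then show ?thesis
    using gh by (metis mult.commute mult.left_neutral mult.assoc)
qed

definition narayana_disc :: "'a::field_char_0 \<Rightarrow> 'a fps" where
  "narayana_disc t = 1 - fps_const (2 * (1 + t)) * fps_X + fps_const ((1 - t)^2) * fps_X^2"

definition narayana_disc_root :: "'a::field_char_0 \<Rightarrow> 'a fps" where
  "narayana_disc_root t = fps_const (2 * t) * fps_X * (gammaF t - 1) + fps_const (1 + t) * fps_X - 1"

lemma narayana_disc_mult_nth:
  "(narayana_disc t * f) $ n = f $ n - 2 * (1 + t) * (if n = 0 then 0 else f $ (n - 1))
     + (1 - t)^2 * (if n < 2 then 0 else f $ (n - 2))"
proof -
  have "narayana_disc t * f = f - fps_const (2 * (1 + t)) * (fps_X * f) + fps_const ((1 - t)^2) * (fps_X^2 * f)"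
    by (simp add: narayana_disc_def algebra_simps)
  then show ?thesis
    by (simp add: fps_X_power_mult_nth)
qed

lemma narayana_disc_nth:
  "narayana_disc t $ n = (if n = 0 then 1 else if n = 1 then - 2 * (1 + t) else if n = 2 then (1 - t)^2 else 0)"
  using narayana_disc_mult_nth[of t 1 n] by (auto simp: numeral_2_eq_2)

lemma fps_deriv_narayana_disc:
  "fps_deriv (narayana_disc t) = fps_const (- 2 * (1 + t)) + fps_const (2 * (1 - t)^2) * fps_X"
  by (rule fps_ext) (simp add: narayana_disc_nth numeral_2_eq_2)

lemma narayana_disc_root_nth:
  "narayana_disc_root t $ n = (if n = 0 then -1 else if n = 1 then 1 + t else 2 * t * narayana (n - 1) t)"
proof -
  have "narayana_disc_root t = fps_const (2 * t) * (fps_X * (gammaF t - 1)) + fps_const (1 + t) * fps_X - 1"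
    by (simp add: narayana_disc_root_def mult.assoc)
  then show ?thesis
    by (auto simp: gammaF_def)
qed

lemma narayana_disc_root_ode:
  "2 * narayana_disc t * fps_deriv (narayana_disc_root t) = fps_deriv (narayana_disc t) * narayana_disc_root t"
proof (rule fps_ext)
  fix n
  define S where "S = narayana_disc_root t"
  have lhs: "(2 * narayana_disc t * fps_deriv S) $ n = 2 * (of_nat (n + 1) * S $ (n + 1)
      - 2 * (1 + t) * (if n = 0 then 0 else of_nat n * S $ n)
      + (1 - t)^2 * (if n < 2 then 0 else of_nat (n - 1) * S $ (n - 1)))"
    by (simp add: mult.assoc fps_numeral_fps_const narayana_disc_mult_nth Suc_diff_Suc numeral_2_eq_2)
  have rhs: "(fps_deriv (narayana_disc t) * S) $ n = - 2 * (1 + t) * S $ n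
      + 2 * (1 - t)^2 * (if n = 0 then 0 else S $ (n - 1))"
    by (simp add: fps_deriv_narayana_disc algebra_simps)
  have "n = 0 \<or> n = 1 \<or> n = 2 \<or> n = (n - 3) + 3"
    by arith
  then consider "n = 0" | "n = 1" | "n = 2" | N where "n = N + 3"
    by blast
  then show "(2 * narayana_disc t * fps_deriv S) $ n = (fps_deriv (narayana_disc t) * S) $ n"
  proof cases
    case 4
    define g1 g2 g3 where "g1 = narayana (N + 1) t" and "g2 = narayana (N + 2) t" and "g3 = narayana (N + 3) t"
    have S_vals: "S $ (N + 4) = 2 * t * g3" "S $ (N + 3) = 2 * t * g2" "S $ Suc (Suc N) = 2 * t * g1"
      by (simp_all add: S_def g1_def g2_def g3_def narayana_disc_root_nth add.commute)
    have "(2 * narayana_disc t * fps_deriv S) $ n - (fps_deriv (narayana_disc t) * S) $ n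
      = 4 * t * (of_nat (N + 4) * g3 - ((1 + t) * of_nat (2 * N + 5) * g2 - (1 - t)^2 * of_nat (N + 1) * g1))"
      unfolding lhs rhs by (simp add: 4 S_vals algebra_simps)
    then show ?thesis
      using narayana_rec[of N t] by (simp add: g1_def g2_def g3_def)
  qed (unfold lhs rhs, simp_all add: S_def narayana_disc_root_nth algebra_simps power2_eq_square)
qed

lemma narayana_disc_root_square: "(narayana_disc_root t)^2 = narayana_disc t"
  by (rule fps_square_eq_of_deriv[OF _ _ narayana_disc_root_ode])
    (simp_all add: narayana_disc_root_nth narayana_disc_nth)

lemma gammaF_quadratic:
  fixes t :: "'a::field_char_0"
  defines "G \<equiv> gammaF t - 1"
  shows "fps_const t * fps_X * G^2 + (fps_const (1 + t) * fps_X - 1) * G + fps_X = 0"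
proof (cases "t = 0")
  case True
  (* Here the discriminant identity is void; instead G = X / (1 - X). *)
  have G_nth: "G $ n = (if n = 0 then 0 else 1)" for n
    using True by (simp add: G_def gammaF_def narayana_at_0)
  have "fps_const t * fps_X * G^2 + (fps_const (1 + t) * fps_X - 1) * G + fps_X = fps_X * G - G + fps_X"
    using True by (simp add: algebra_simps)
  also have "\<dots> = 0"
    by (rule fps_ext) (simp add: G_nth)
  finally show ?thesis .
next
  case False
  define T where "T = fps_const t"
  have T: "fps_const (2 * t) = 2 * T" "fps_const (1 + t) = 1 + T" "fps_const (2 * (1 + t)) = 2 * (1 + T)"
    "fps_const ((1 - t)^2) = (1 - T)^2"
    by (simp_all add: T_def fps_numeral_fps_const
        flip: fps_const_add fps_const_mult fps_const_neg fps_const_sub fps_const_power)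
  have "4 * T * fps_X * (T * fps_X * G^2 + ((1 + T) * fps_X - 1) * G + fps_X)
      = (narayana_disc_root t)^2 - narayana_disc t"
    unfolding narayana_disc_root_def narayana_disc_def T G_def[symmetric] by algebra
  also have "\<dots> = 0"
    by (simp add: narayana_disc_root_square)
  finally have "4 * T * fps_X * (T * fps_X * G^2 + ((1 + T) * fps_X - 1) * G + fps_X) = 0" .
  moreover have "4 * T * fps_X \<noteq> 0"
    using False by (simp add: T_def fps_numeral_fps_const)
  ultimately show ?thesis
    unfolding T(2) T_def by simp
qed

section \<open>The recurrence of beta\<close>

lemma one_minus_const_X_mult_nth:
  fixes f :: "'a::comm_ring_1 fps"
  shows "((1 - fps_const c * fps_X) * f) $ n = f $ n - (if n = 0 then 0 else c * f $ (n - 1))"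
proof -
  have "(1 - fps_const c * fps_X) * f = f - fps_const c * (fps_X * f)"
    by (simp add: left_diff_distrib mult.assoc)
  then show ?thesis
    by simp
qed

(* The expansion of (1 - c X)^(-a-1). *)
definition neg_binomial_fps :: "nat \<Rightarrow> 'a::comm_ring_1 \<Rightarrow> 'a fps" where
  "neg_binomial_fps a c = Abs_fps (\<lambda>i. of_nat ((a + i) choose i) * c ^ i)"

lemma one_minus_const_X_mult_neg_binomial_fps:
  "(1 - fps_const c * fps_X) * neg_binomial_fps (Suc a) c = neg_binomial_fps a c"
proof (rule fps_ext)
  fix n
  show "((1 - fps_const c * fps_X) * neg_binomial_fps (Suc a) c) $ n = neg_binomial_fps a c $ n"
    by (cases n) (simp_all add: one_minus_const_X_mult_nth neg_binomial_fps_def algebra_simps)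
qed

lemma one_minus_const_X_mult_deriv_neg_binomial_fps:
  "(1 - fps_const c * fps_X) * fps_deriv (neg_binomial_fps a c)
     = fps_const (of_nat (Suc a) * c) * neg_binomial_fps a c"
proof (rule fps_ext)
  fix n
  define B where "B = neg_binomial_fps a c"
  have "((1 - fps_const c * fps_X) * fps_deriv B) $ n = of_nat (Suc n) * B $ Suc n - c * (of_nat n * B $ n)"
    by (cases n) (simp_all add: one_minus_const_X_mult_nth)
  also have "of_nat (Suc n) * B $ Suc n = of_nat (Suc (a + n)) * of_nat (a + n choose n) * c ^ Suc n"
  proof -
    have "of_nat (Suc n) * of_nat (Suc (a + n) choose Suc n)
        = (of_nat (Suc (a + n)) * of_nat (a + n choose n) :: 'a)"
      by (metis Suc_times_binomial of_nat_mult)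
    then show ?thesis
      unfolding B_def neg_binomial_fps_def by (simp del: binomial_Suc_Suc of_nat_Suc add: mult.assoc[symmetric])
  qed
  finally show "((1 - fps_const c * fps_X) * fps_deriv B) $ n = (fps_const (of_nat (Suc a) * c) * B) $ n"
    by (simp add: B_def neg_binomial_fps_def algebra_simps)
qed

definition rho_fps :: "nat \<Rightarrow> 'a::comm_ring_1 \<Rightarrow> 'a fps" where
  "rho_fps a t = neg_binomial_fps a t * neg_binomial_fps a 1"

lemma rho_eq_rho_fps_nth:
  assumes "d < m"
  shows "rho m t d = of_nat m / of_nat (m - d) * rho_fps (m - 1 - d) t $ d"
proof -
  have "(\<Sum>i=0..d. of_nat ((m - 1 - d + i choose i) * (m - 1 - i choose (d - i))) * t ^ i)
      = (\<Sum>i=0..d. neg_binomial_fps (m - 1 - d) t $ i * neg_binomial_fps (m - 1 - d) 1 $ (d - i))"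
  proof (rule sum.cong)
    fix i assume "i \<in> {0..d}"
    then have "m - 1 - d + (d - i) = m - 1 - i"
      using assms by simp
    then show "of_nat ((m - 1 - d + i choose i) * (m - 1 - i choose (d - i))) * t ^ i
        = neg_binomial_fps (m - 1 - d) t $ i * neg_binomial_fps (m - 1 - d) 1 $ (d - i)"
      by (simp add: neg_binomial_fps_def algebra_simps)
  qed simp
  then show ?thesis
    using assms by (simp add: rho_def rho_fps_def fps_mult_nth)
qed

lemma rho_diag: "rho m t m = 1 + t ^ m"
  by (simp add: rho_def)

lemma rho_0: "rho (Suc m) t 0 = 1"
  using of_nat_neq_0[of m, where 'a='a] by (simp add: rho_def)

lemma rho_1: "rho (Suc m) t 1 = of_nat (Suc m) * (1 + t)"
proof (cases m)
  case (Suc k)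
  then show ?thesis
    using of_nat_neq_0[of k, where 'a='a] by (simp add: rho_def field_simps)
qed (simp add: rho_diag)

lemma rho_Suc_diag: "rho (Suc m) t m = of_nat (Suc m) * (\<Sum>i\<le>m. t ^ i)"
proof -
  have "(\<Sum>i=0..m. of_nat ((i choose i) * (m - i choose (m - i))) * t ^ i) = (\<Sum>i\<le>m. t ^ i)"
    by (simp add: atLeast0AtMost)
  then show ?thesis
    by (simp add: rho_def)
qed

lemma rho_fps_Suc:
  "(1 - fps_const t * fps_X) * (1 - fps_X) * rho_fps (Suc a) t = rho_fps a t"
proof -
  have "(1 - fps_const t * fps_X) * (1 - fps_X) * rho_fps (Suc a) t
      = ((1 - fps_const t * fps_X) * neg_binomial_fps (Suc a) t)
        * ((1 - fps_const 1 * fps_X) * neg_binomial_fps (Suc a) 1)"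
    by (simp add: rho_fps_def ac_simps)
  then show ?thesis
    by (simp only: one_minus_const_X_mult_neg_binomial_fps rho_fps_def)
qed

lemma rho_fps_deriv:
  "(1 - fps_const t * fps_X) * (1 - fps_X) * fps_deriv (rho_fps a t)
     = fps_const (of_nat (Suc a)) * (1 + fps_const t - fps_const (2 * t) * fps_X) * rho_fps a t"
proof -
  define E A where "E = neg_binomial_fps a t" and "A = neg_binomial_fps a (1 :: 'a)"
  have E': "(1 - fps_const t * fps_X) * fps_deriv E = fps_const (of_nat (Suc a) * t) * E"
    and A': "(1 - fps_X) * fps_deriv A = fps_const (of_nat (Suc a)) * A"
    using one_minus_const_X_mult_deriv_neg_binomial_fps[of t a]
      one_minus_const_X_mult_deriv_neg_binomial_fps[of 1 a]
    by (simp_all add: E_def A_def)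
  have "(1 - fps_const t * fps_X) * (1 - fps_X) * fps_deriv (E * A)
      = (1 - fps_X) * A * ((1 - fps_const t * fps_X) * fps_deriv E)
        + (1 - fps_const t * fps_X) * E * ((1 - fps_X) * fps_deriv A)"
    by (simp add: algebra_simps)
  also have "\<dots> = fps_const (of_nat (Suc a)) * (1 + fps_const t - fps_const (2 * t) * fps_X) * (E * A)"
  proof -
    have const_mult: "fps_const (of_nat (Suc a) * t) = fps_const (of_nat (Suc a)) * fps_const t"
      "fps_const (2 * t) = 2 * fps_const t"
      by (simp_all add: fps_numeral_fps_const)
    show ?thesis
      unfolding E' A' const_mult by (simp add: algebra_simps del: fps_const_mult)
  qed
  finally show ?thesis
    by (simp add: rho_fps_def E_def A_def)
qed

lemma fps_X_mult_deriv_nth: "(fps_X * fps_deriv f) $ n = of_nat n * f $ n"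
  by (cases n) simp_all

lemma one_minus_const_X_one_minus_X_mult_nth:
  fixes f :: "'a::comm_ring_1 fps"
  shows "((1 - fps_const t * fps_X) * (1 - fps_X) * f) $ (n + 2)
    = f $ (n + 2) - (1 + t) * f $ (n + 1) + t * f $ n"
  using one_minus_const_X_mult_nth[of t "(1 - fps_X) * f"] one_minus_const_X_mult_nth[of 1 f]
  by (simp add: mult.assoc algebra_simps)

lemma rho_rec_interior:
  fixes t :: "'a::field_char_0"
  shows "rho (q + n + 4) t (n + 2) = rho (q + n + 3) t (n + 2) + (1 + t) * rho (q + n + 3) t (n + 1)
           - t * rho (q + n + 2) t n"
proof -
  define R where "R k = rho_fps (Suc q) t $ k" for k
  have shift: "rho_fps q t $ (n + 2) = R (n + 2) - (1 + t) * R (n + 1) + t * R n"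
    unfolding R_def using one_minus_const_X_one_minus_X_mult_nth[of t "rho_fps (Suc q) t" n]
    by (simp add: rho_fps_Suc)
  have "of_nat (n + 2) * R (n + 2) - (1 + t) * (of_nat (n + 1) * R (n + 1)) + t * (of_nat n * R n)
      = (fps_X * ((1 - fps_const t * fps_X) * (1 - fps_X) * fps_deriv (rho_fps (Suc q) t))) $ (n + 2)"
    unfolding R_def mult.left_commute[of fps_X] one_minus_const_X_one_minus_X_mult_nth fps_X_mult_deriv_nth ..
  also have "\<dots> = of_nat (q + 2) * ((1 + t) * R (n + 1) - 2 * t * R n)"
    unfolding rho_fps_deriv R_def by (simp add: algebra_simps)
  finally have deriv: "of_nat (n + 2) * R (n + 2)
      = (1 + t) * of_nat (q + n + 3) * R (n + 1) - t * of_nat (2 * q + n + 4) * R n"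
    by (simp add: algebra_simps)
  have rho_R: "rho (q + n + 4) t (n + 2) = of_nat (q + n + 4) / of_nat (q + 2) * R (n + 2)"
    "rho (q + n + 3) t (n + 2) = of_nat (q + n + 3) / of_nat (q + 1) * rho_fps q t $ (n + 2)"
    "rho (q + n + 3) t (n + 1) = of_nat (q + n + 3) / of_nat (q + 2) * R (n + 1)"
    "rho (q + n + 2) t n = of_nat (q + n + 2) / of_nat (q + 2) * R n"
    unfolding R_def by (subst rho_eq_rho_fps_nth; simp add: numeral_eq_Suc)+
  have "of_nat (q + 1) \<noteq> (0 :: 'a)" "of_nat (q + 2) \<noteq> (0 :: 'a)"
    unfolding of_nat_eq_0_iff by simp_all
  then show ?thesis
    using deriv unfolding rho_R shift by (simp add: divide_simps) algebra
qed

lemma rho_rec: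
  fixes t :: "'a::field_char_0"
  assumes "n \<le> m"
  shows "rho (m + 2) t (n + 2)
    = (if n = m then 0 else rho (m + 1) t (n + 2)) + (1 + t) * rho (m + 1) t (n + 1) - t * rho m t n"
proof -
  consider "n + 2 \<le> m" | "m = n + 1" | "m = n"
    using assms by linarith
  then show ?thesis
  proof cases
    case 1
    then obtain q where "m = q + n + 2"
      by (metis add.commute le_add_diff_inverse2 add.assoc)
    then have m: "q + n + 4 = m + 2" "q + n + 3 = m + 1" "q + n + 2 = m"
      by simp_all
    show ?thesis
      using rho_rec_interior[of q n t, unfolded m] 1 by simp
  next
    case 2
    define g where "g k = (\<Sum>i\<le>k. t ^ i)" for k
    have g_Suc: "g (Suc k) = g k + t ^ Suc k" "t * g k = g (Suc k) - 1" for k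
      by (simp add: g_def) (simp add: g_def sum_distrib_left sum.atMost_Suc_shift del: sum.atMost_Suc)
    have "of_nat (n + 3) * g (n + 2)
        = 1 + t ^ (n + 2) + (1 + t) * (of_nat (n + 2) * g (n + 1)) - t * (of_nat (n + 1) * g n)"
      using g_Suc[of "n + 1"] g_Suc[of n] by (simp add: algebra_simps)
    then show ?thesis
      using rho_Suc_diag[of "n + 2" t] rho_Suc_diag[of "n + 1" t] rho_Suc_diag[of n t]
      by (simp add: 2 rho_diag g_def ac_simps)
  next
    case 3
    then show ?thesis
      by (simp add: rho_diag algebra_simps)
  qed
qed

lemma fps_neg_X_power: "(- fps_X) ^ d = fps_const ((- 1) ^ d) * (fps_X ^ d :: 'a::comm_ring_1 fps)"
  by (induction d) (simp_all add: algebra_simps)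

lemma betaF_nth: "betaF m t $ n = (if n \<le> m then (- 1) ^ n * rho m t n else 0)"
proof -
  have "betaF m t $ n = (\<Sum>d=0..m. if d = n then (- 1) ^ n * rho m t n else 0)"
    unfolding betaF_def fps_sum_nth fps_neg_X_power
    by (intro sum.cong) (simp_all add: mult.assoc[symmetric])
  then show ?thesis
    by simp
qed

lemma betaF_0: "betaF 0 t = 2"
  by (rule fps_ext) (simp add: betaF_nth rho_diag fps_numeral_nth)

lemma betaF_1: "betaF 1 t = 1 - fps_const (1 + t) * fps_X"
  by (rule fps_ext) (auto simp: betaF_nth rho_diag rho_0 le_Suc_eq)

lemma betaF_rec_nth:
  fixes t :: "'a::field_char_0"
  shows "betaF (m + 2) t $ (k + 2)
    = betaF (m + 1) t $ (k + 2) - (1 + t) * betaF (m + 1) t $ (k + 1) - t * betaF m t $ k"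
proof (cases "k \<le> m")
  case True
  have "betaF (m + 2) t $ (k + 2) = (- 1) ^ k * rho (m + 2) t (k + 2)"
    using True by (simp add: betaF_nth)
  also have "\<dots> = (- 1) ^ k * ((if k = m then 0 else rho (m + 1) t (k + 2))
      + (1 + t) * rho (m + 1) t (k + 1) - t * rho m t k)"
    unfolding rho_rec[OF True] ..
  also have "\<dots> = betaF (m + 1) t $ (k + 2) - (1 + t) * betaF (m + 1) t $ (k + 1) - t * betaF m t $ k"
    using True by (cases "k = m") (simp_all add: betaF_nth algebra_simps)
  finally show ?thesis .
qed (simp add: betaF_nth)

lemma betaF_rec:
  fixes t :: "'a::field_char_0"
  shows "betaF (m + 2) t
    = (1 - fps_const (1 + t) * fps_X) * betaF (m + 1) t - fps_const t * fps_X^2 * betaF m t"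
proof (rule fps_ext)
  fix n
  have rhs: "((1 - fps_const (1 + t) * fps_X) * betaF (m + 1) t - fps_const t * fps_X^2 * betaF m t) $ n
      = betaF (m + 1) t $ n - (if n = 0 then 0 else (1 + t) * betaF (m + 1) t $ (n - 1))
        - (if n < 2 then 0 else t * betaF m t $ (n - 2))"
    by (simp add: one_minus_const_X_mult_nth fps_X_power_mult_nth mult.assoc del: power2_eq_square)
  consider "n = 0" | "n = 1" | k where "n = k + 2"
    by (metis One_nat_def add_2_eq_Suc' not0_implies_Suc)
  then show "betaF (m + 2) t $ n
      = ((1 - fps_const (1 + t) * fps_X) * betaF (m + 1) t - fps_const t * fps_X^2 * betaF m t) $ n"
  proof cases
    case 1
    then show ?thesis
      unfolding rhs by (simp add: betaF_nth rho_0)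
  next
    case 2
    then show ?thesis
      unfolding rhs using rho_1[of "m + 1" t] rho_1[of m t] by (simp add: betaF_nth rho_0 algebra_simps)
  next
    case 3
    then show ?thesis
      unfolding rhs unfolding 3 using betaF_rec_nth[of m t k] by simp
  qed
qed

section \<open>beta as a power sum\<close>

lemma power_sum_eq_of_rec:
  fixes u v :: "'a::comm_ring_1"
  assumes "b 0 = 2" "b 1 = u + v" "\<And>n. b (n + 2) = (u + v) * b (n + 1) - u * v * b n"
  shows "b n = u ^ n + v ^ n"
proof (induction n rule: induct_nat_012)
  case (ge2 n)
  then show ?case
    using assms(3)[of n] by (simp add: algebra_simps)
qed (use assms in simp_all)

lemma gammaF_vieta:
  fixes t :: "'a::field_char_0"
  defines "G \<equiv> gammaF t - 1"
  defines "u \<equiv> fps_const t * fps_X * G" and "v \<equiv> inverse (fps_shift 1 G)"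
  shows "v * G = fps_X" "u + v = 1 - fps_const (1 + t) * fps_X" "u * v = fps_const t * fps_X^2"
proof -
  define H where "H = fps_shift 1 G"
  have G_eq: "G = fps_X * H"
    unfolding H_def by (rule fps_ext) (simp add: G_def gammaF_def)
  have Hv: "H * v = 1"
    unfolding v_def H_def[symmetric] by (rule inverse_mult_eq_1') (simp add: H_def G_def gammaF_def)
  show "v * G = fps_X"
    unfolding G_eq by (simp add: algebra_simps Hv)
  have "fps_X * (fps_const t * fps_X * G * H + (fps_const (1 + t) * fps_X - 1) * H + 1) = 0"
    using gammaF_quadratic[of t] unfolding G_def[symmetric] by (simp add: G_eq algebra_simps power2_eq_square)
  then have "v * (fps_const t * fps_X * G * H + (fps_const (1 + t) * fps_X - 1) * H + 1) = 0"
    by simp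
  moreover have "v * (fps_const t * fps_X * G * H + (fps_const (1 + t) * fps_X - 1) * H + 1)
      = u * (H * v) + (fps_const (1 + t) * fps_X - 1) * (H * v) + v"
    by (simp add: u_def algebra_simps)
  ultimately show "u + v = 1 - fps_const (1 + t) * fps_X"
    by (simp add: Hv algebra_simps eq_diff_eq)
  show "u * v = fps_const t * fps_X^2"
    unfolding u_def G_eq by (simp add: algebra_simps power2_eq_square Hv)
qed

lemma betaF_mult_power:
  fixes t :: "'a::field_char_0"
  defines "G \<equiv> gammaF t - 1"
  shows "betaF m t * G^m = fps_X^m + fps_const (t^m) * fps_X^m * G^(2 * m)"
proof -
  define u v where "u = fps_const t * fps_X * G" and "v = inverse (fps_shift 1 G)"
  note vieta = gammaF_vieta[of t, folded G_def, folded u_def v_def]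
  have beta: "betaF n t = u ^ n + v ^ n" for n
  proof (rule power_sum_eq_of_rec)
    show "betaF 1 t = u + v"
      unfolding vieta(2) by (rule betaF_1)
    show "betaF (k + 2) t = (u + v) * betaF (k + 1) t - u * v * betaF k t" for k
      unfolding vieta(2,3) by (rule betaF_rec)
  qed (rule betaF_0)
  have "v^m * G^m = fps_X^m"
    using vieta(1) by (simp flip: power_mult_distrib)
  then have "betaF m t * G^m = (fps_const t * fps_X * G)^m * G^m + fps_X^m"
    unfolding beta u_def by (simp add: distrib_right)
  moreover have "G^(2 * m) = G^m * G^m"
    by (simp add: mult_2 power_add)
  ultimately show ?thesis
    by (simp add: power_mult_distrib algebra_simps)
qed

lemma quadratic_identity_mult_X_intpow:
  fixes B c g :: "'a::comm_ring_1 fls"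
  assumes "B * g = fls_X_intpow k + c * fls_X_intpow k * g^2"
  shows "0 = - fls_X_intpow (k - j) + B * (fls_X_intpow (- j) * g)
    - c * fls_X_intpow (k + j) * (fls_X_intpow (- j) * g)^2"
proof -
  define q y z where "q = (fls_X_intpow k :: 'a fls)" and "y = (fls_X_intpow (- j) :: 'a fls)"
    and "z = (fls_X_intpow (k + j) :: 'a fls)"
  have qy: "fls_X_intpow (k - j) = q * y" "z * y^2 = q * y"
    unfolding q_def y_def z_def fls_X_intpow_power fls_X_intpow_times_fls_X_intpow by simp_all
  have "- fls_X_intpow (k - j) + B * (y * g) - c * z * (y * g)^2 = y * (B * g) - q * y - c * g^2 * (z * y^2)"
    unfolding qy(1) by (simp add: algebra_simps power2_eq_square)
  also have "\<dots> = 0"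
    unfolding assms[folded q_def] qy(2) by (simp add: algebra_simps)
  finally show ?thesis
    unfolding y_def z_def by simp
qed

theorem corollary5p2:
  fixes m :: nat and m0 :: int and t :: "'a::field_char_0"
  assumes "m \<ge> 1"
  shows "(0 :: 'a fls) =
     - fls_X_intpow (int m - m0)
     + fps_to_fls (betaF m t) * FF m m0 t
     - fls_const (t ^ m) * fls_X_intpow (int m + m0) * (FF m m0 t) ^ 2"
proof -
  define g where "g = fps_to_fls ((gammaF t - 1)^m)"
  have "fps_to_fls (betaF m t) * g = fls_X_intpow (int m) + fls_const (t ^ m) * fls_X_intpow (int m) * g^2"
    using arg_cong[OF betaF_mult_power[of m t], of fps_to_fls] unfolding g_def
    by (simp add: fls_times_fps_to_fls fps_to_fls_power fls_X_power_conv_shift_1 power_mult mult.commute[of 2])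
  moreover have "FF m m0 t = fls_X_intpow (- m0) * g"
    using fls_X_intpow_times_conv_shift(1)[of "- m0" g] by (simp add: FF_def g_def)
  ultimately show ?thesis
    by (simp only: quadratic_identity_mult_X_intpow)
qed

end
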